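(* Let $\phi_{\mathrm p}$ (on $\mathbb R^n$) and $\phi_{\mathrm d}$ (on $\mathbb R^m$) be Bregman kernels with distances $d_{\mathrm p},d_{\mathrm d}$ satisfying $d_{\mathrm p}(x,x')\ge\frac12\|x-x'\|_{\mathrm p}^2$ and $d_{\mathrm d}(z,z')\ge\frac12\|z-z'\|_{\mathrm d}^2$ for all $(x,x')\in\operatorname{dom} d_{\mathrm p}$, $(z,z')\in\operatorname{dom} d_{\mathrm d}$, where $\|\cdot\|_{\mathrm p},\|\cdot\|_{\mathrm d}$ are norms. Let $h$ be a convex function, differentiable on its open domain, with $\operatorname{dom}\phi_{\mathrm p}\subseteq\operatorname{dom} h$ and, for some $L>0$, $h(x)-h(x')-\langle\nabla h(x'),x-x'\rangle\le L\,d_{\mathrm p}(x,x')$ for all $(x,x')\in\operatorname{dom} d_{\mathrm p}$. Let $A\in\mathbb R^{m\times n}$, $\|A\|=\sup_{u\ne0,v\ne0}\frac{\langle v,Au\rangle}{\|v\|_{\mathrm d}\|u\|_{\mathrm p}}$, and $\sigma,\tau>0$. Define \[\phi_\pm(x,z)=\tfrac1\tau\phi_{\mathrm p}(x)+\tfrac1\sigma\phi_{\mathrm d}(z)\pm\langle z,Ax\rangle,\qquad \phi_{\mathrm{dcv}}=\phi_+-h,\quad \phi_{\mathrm{pcv}}=\phi_--h.\] Then: if $\sigma\tau\|A\|^2\le1$, the functions $\phi_+$ and $\phi_-$ are convex, and they are strongly convex if $\sigma\tau\|A\|^2<1$; if $\sigma\tau\|A\|^2+\tau L\le1$, the functions $\phi_{\mathrm{dcv}}$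 and $\phi_{\mathrm{pcv}}$ are convex, and they are strongly convex if $\sigma\tau\|A\|^2+\tau L<1$.
   Context: A Bregman kernel is a convex function $\phi$ whose domain has nonempty interior, continuous on $\operatorname{dom}\phi$ and continuously differentiable on $\operatorname{int}(\operatorname{dom}\phi)$; its Bregman distance is $d(x,y)=\phi(x)-\phi(y)-\langle\nabla\phi(y),x-y\rangle$ with $\operatorname{dom} d=\operatorname{dom}\phi\times\operatorname{int}(\operatorname{dom}\phi)$. The functions $h(x)$, $\phi_\pm$ etc. are considered on $\operatorname{dom}\phi_{\mathrm p}\times\operatorname{dom}\phi_{\mathrm d}$. *)

theory Defs
  imports "HOL-Analysis.Analysis"
begin

definition is_norm :: "('a::real_vector \<Rightarrow> real) \<Rightarrow> bool" where
  "is_norm N \<longleftrightarrow> (\<forall>x. 0 \<le> N x) \<and> (\<forall>x. N x = 0 \<longleftrightarrow> x = 0)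
     \<and> (\<forall>c x. N (c *\<^sub>R x) = \<bar>c\<bar> * N x) \<and> (\<forall>x y. N (x + y) \<le> N x + N y)"

text \<open>Bregman kernel with domain D (a function is identified with its restriction to
  its effective domain D) and gradient g on the interior of D.\<close>
definition bregman_kernel ::
  "('a::euclidean_space) set \<Rightarrow> ('a \<Rightarrow> real) \<Rightarrow> ('a \<Rightarrow> 'a) \<Rightarrow> bool" where
  "bregman_kernel D \<phi> g \<longleftrightarrow> convex_on D \<phi> \<and> interior D \<noteq> {} \<and> continuous_on D \<phi>
     \<and> (\<forall>y\<in>interior D. (\<phi> has_derivative (\<lambda>v. g y \<bullet> v)) (at y))
     \<and> continuous_on (interior D) g"

text \<open>Bregman distance d(x,y), meaningful on dom d = D \<times> interior D.\<close>
definition bregman_dist :: "('a::euclidean_space \<Rightarrow> real) \<Rightarrow> ('a \<Rightarrow> 'a) \<Rightarrow> 'a \<Rightarrow> 'a \<Rightarrow> real" where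
  "bregman_dist \<phi> g x y = \<phi> x - \<phi> y - g y \<bullet> (x - y)"

definition op_norm_pd ::
  "(real^'n \<Rightarrow> real) \<Rightarrow> (real^'m \<Rightarrow> real) \<Rightarrow> real^'n^'m \<Rightarrow> real" where
  "op_norm_pd Np Nd A = Sup {(v \<bullet> (A *v u)) / (Nd v * Np u) | u v. u \<noteq> 0 \<and> v \<noteq> 0}"

text \<open>Strong convexity (modulus \<mu> > 0, w.r.t. the Euclidean norm; all norms are
  equivalent in finite dimension).\<close>
definition strongly_convex_on :: "('a::real_normed_vector) set \<Rightarrow> ('a \<Rightarrow> real) \<Rightarrow> bool" where
  "strongly_convex_on S f \<longleftrightarrow> (\<exists>\<mu>>0. convex_on S (\<lambda>w. f w - \<mu> / 2 * (norm w)\<^sup>2))"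

end

theory Submission
  imports Defs
begin

text \<open>
  Everything is phrased through the convexity gap
  \<open>(1 - t) f x + t f y - f ((1 - t) x + t y)\<close>, which is linear in \<open>f\<close>.
  The kernel inequality \<open>d \<ge> \<parallel>\<cdot>\<parallel>\<^sup>2/2\<close> bounds the gap of each kernel below by
  \<open>t (1 - t) \<parallel>x - y\<parallel>\<^sup>2/2\<close>, and relative smoothness bounds the gap of \<open>h\<close> by \<open>L\<close> times
  the gap of \<open>\<phi>\<^sub>p\<close>: first at interior points, where both follow from the tangent
  inequalities at the convex combination, then on the whole domain by continuity.
  The coupling \<open>\<langle>z, A x\<rangle>\<close> is bilinear, so its gap is exactly
  \<open>t (1 - t) \<langle>z - z', A (x - x')\<rangle> \<ge> -t (1 - t) \<parallel>A\<parallel> a b\<close> with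
  \<open>a = \<parallel>x - x'\<parallel>\<^sub>p\<close>, \<open>b = \<parallel>z - z'\<parallel>\<^sub>d\<close>. Hence the gap of \<open>\<phi>\<^sub>\<plusminus> - h\<close> is at least
  \<open>t (1 - t)/2\<close> times the quadratic form \<open>(1/\<tau> - L) a\<^sup>2 - 2 \<parallel>A\<parallel> a b + b\<^sup>2/\<sigma>\<close>, which is
  positive semidefinite exactly when \<open>\<sigma> \<tau> \<parallel>A\<parallel>\<^sup>2 + \<tau> L \<le> 1\<close>. Under strict inequality a
  multiple of \<open>a\<^sup>2 + b\<^sup>2\<close> can be split off, and equivalence of norms in finite dimension
  turns it into a multiple of the Euclidean \<open>\<parallel>(x, z) - (x', z')\<parallel>\<^sup>2\<close>.
\<close>

definition convexity_gap :: "('a::real_vector \<Rightarrow> real) \<Rightarrow> 'a \<Rightarrow> 'a \<Rightarrow> real \<Rightarrow> real" where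
  "convexity_gap f x y t = (1 - t) * f x + t * f y - f ((1 - t) *\<^sub>R x + t *\<^sub>R y)"

lemma convex_onI_convexity_gap:
  assumes "convex S"
    and "\<And>x y t. x \<in> S \<Longrightarrow> y \<in> S \<Longrightarrow> 0 < t \<Longrightarrow> t < 1 \<Longrightarrow> 0 \<le> convexity_gap f x y t"
  shows "convex_on S f"
  using assms by (intro convex_onI) (auto simp: convexity_gap_def)

lemma convexity_gap_norm_sq:
  fixes x y :: "'a::real_inner"
  shows "convexity_gap (\<lambda>w. (norm w)\<^sup>2) x y t = t * (1 - t) * (norm (x - y))\<^sup>2"
  unfolding convexity_gap_def power2_norm_eq_inner
  by (simp add: inner_commute algebra_simps power2_eq_square)

lemma convexity_gap_bilinear:
  assumes "bilinear c"
  shows "convexity_gap (\<lambda>(x, z). c x z) (x1, z1) (x2, z2) t = t * (1 - t) * c (x1 - x2) (z1 - z2)"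
  using assms
  by (simp add: convexity_gap_def bilinear_ladd bilinear_radd bilinear_lmul bilinear_rmul
      bilinear_lsub bilinear_rsub algebra_simps)

lemma convexity_gap_ge_of_tangent_bounds:
  fixes G :: "'a::real_inner"
  assumes t: "0 \<le> t" "t \<le> 1" and w: "w = (1 - t) *\<^sub>R x + t *\<^sub>R y"
    and x: "F w + G \<bullet> (x - w) + a * t\<^sup>2 \<le> F x"
    and y: "F w + G \<bullet> (y - w) + a * (1 - t)\<^sup>2 \<le> F y"
  shows "t * (1 - t) * a \<le> convexity_gap F x y t"
proof -
  have "(1 - t) *\<^sub>R (x - w) + t *\<^sub>R (y - w) = 0"
    unfolding w by (simp add: algebra_simps)
  then have tangent_cancels: "(1 - t) * (G \<bullet> (x - w)) + t * (G \<bullet> (y - w)) = 0"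
    by (metis inner_add_right inner_scaleR_right inner_zero_right)
  have "(1 - t) * (F w + G \<bullet> (x - w) + a * t\<^sup>2) \<le> (1 - t) * F x"
    using x t by (intro mult_left_mono) auto
  moreover have "t * (F w + G \<bullet> (y - w) + a * (1 - t)\<^sup>2) \<le> t * F y"
    using y t by (intro mult_left_mono) auto
  ultimately show ?thesis
    using tangent_cancels unfolding convexity_gap_def w[symmetric]
    by (simp add: algebra_simps power2_eq_square)
qed

lemma convexity_gap_ge_from_interior:
  fixes F K :: "'a::euclidean_space \<Rightarrow> real"
  assumes D: "convex D" "interior D \<noteq> {}" and F: "continuous_on D F" and K: "continuous_on UNIV K"
    and interior_bound: "\<And>x y t. x \<in> interior D \<Longrightarrow> y \<in> interior D \<Longrightarrow> 0 \<le> t \<Longrightarrow> t \<le> 1 \<Longrightarrow>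
        t * (1 - t) * K (x - y) \<le> convexity_gap F x y t"
    and x: "x \<in> D" and y: "y \<in> D" and t: "0 \<le> t" "t \<le> 1"
  shows "t * (1 - t) * K (x - y) \<le> convexity_gap F x y t"
proof -
  obtain c where c: "c \<in> interior D" using D(2) by blast
  define s :: "nat \<Rightarrow> real" where "s k = inverse (real (Suc k))" for k
  have s: "0 < s k" "s k \<le> 1" for k unfolding s_def by (auto simp: field_simps)
  have s_lim: "s \<longlonglongrightarrow> 0" unfolding s_def by (rule LIMSEQ_inverse_real_of_nat)
  define shrink where "shrink v k = v - s k *\<^sub>R (v - c)" for v k
  have shrink_interior: "shrink v k \<in> interior D" if "v \<in> D" for v k
    unfolding shrink_def by (rule mem_interior_convex_shrink[OF D(1) c that s])
  have shrink_lim: "shrink v \<longlonglongrightarrow> v" for v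
    unfolding shrink_def using tendsto_diff[OF tendsto_const tendsto_scaleR[OF s_lim tendsto_const]]
    by (metis diff_zero scale_zero_left)
  have shrink_D: "shrink v k \<in> D" if "v \<in> D" for v k
    using shrink_interior[OF that] interior_subset by blast
  have mid_in_D: "eventually (\<lambda>k. (1 - t) *\<^sub>R shrink x k + t *\<^sub>R shrink y k \<in> D) sequentially"
    using convexD_alt[OF D(1) shrink_D[OF x] shrink_D[OF y] t] by (blast intro: always_eventually)
  have in_D: "eventually (\<lambda>k. shrink v k \<in> D) sequentially" if "v \<in> D" for v
    using shrink_D[OF that] by (blast intro: always_eventually)
  have mid_D: "(1 - t) *\<^sub>R x + t *\<^sub>R y \<in> D"
    using convexD_alt[OF D(1) x y t] .
  show ?thesis
  proof (rule LIMSEQ_le)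
    show "(\<lambda>k. t * (1 - t) * K (shrink x k - shrink y k)) \<longlonglongrightarrow> t * (1 - t) * K (x - y)"
      by (intro tendsto_intros continuous_on_tendsto_compose[OF K] shrink_lim) auto
    show "(\<lambda>k. convexity_gap F (shrink x k) (shrink y k) t) \<longlonglongrightarrow> convexity_gap F x y t"
      unfolding convexity_gap_def
      by (intro tendsto_intros continuous_on_tendsto_compose[OF F] shrink_lim x y mid_D in_D mid_in_D)
    show "\<exists>N. \<forall>k\<ge>N. t * (1 - t) * K (shrink x k - shrink y k) \<le> convexity_gap F (shrink x k) (shrink y k) t"
      using interior_bound[OF shrink_interior[OF x] shrink_interior[OF y] t] by blast
  qed
qed

context
  fixes N :: "'a::real_vector \<Rightarrow> real"
  assumes N: "is_norm N"
begin

lemma is_norm_nonneg: "0 \<le> N x"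
  using N by (simp add: is_norm_def)

lemma is_norm_pos: "x \<noteq> 0 \<Longrightarrow> 0 < N x"
  using N by (auto simp: is_norm_def order_less_le)

lemma is_norm_zero: "N 0 = 0"
  using N by (simp add: is_norm_def)

lemma is_norm_scaleR: "N (c *\<^sub>R x) = \<bar>c\<bar> * N x"
  using N by (simp add: is_norm_def)

lemma is_norm_triangle: "N (x + y) \<le> N x + N y"
  using N by (simp add: is_norm_def)

lemma is_norm_minus: "N (- x) = N x"
  using is_norm_scaleR[of "-1" x] by simp

lemma is_norm_minus_commute: "N (x - y) = N (y - x)"
  using is_norm_minus[of "x - y"] by simp

lemma is_norm_sum_le: "N (\<Sum>i\<in>I. f i) \<le> (\<Sum>i\<in>I. N (f i))"
proof (induction I rule: infinite_finite_induct)
  case (insert i I)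
  then show ?case using is_norm_triangle[of "f i" "sum f I"] by simp
qed (simp_all add: is_norm_zero)

end

context
  fixes N :: "'a::euclidean_space \<Rightarrow> real"
  assumes N: "is_norm N"
begin

lemma is_norm_le_sum_Basis: "N x \<le> (\<Sum>b\<in>Basis. N b) * norm x"
proof -
  have "N x = N (\<Sum>b\<in>Basis. (x \<bullet> b) *\<^sub>R b)" by (simp add: euclidean_representation)
  also have "\<dots> \<le> (\<Sum>b\<in>Basis. \<bar>x \<bullet> b\<bar> * N b)"
    using is_norm_sum_le[OF N, of "\<lambda>b. (x \<bullet> b) *\<^sub>R b" Basis] by (simp add: is_norm_scaleR[OF N])
  also have "\<dots> \<le> (\<Sum>b\<in>Basis. norm x * N b)"
    by (intro sum_mono mult_right_mono) (auto simp: Basis_le_norm is_norm_nonneg[OF N])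
  finally show ?thesis by (simp add: sum_distrib_left mult.commute)
qed

lemma is_norm_continuous_on: "continuous_on S N"
proof -
  let ?C = "\<Sum>b\<in>Basis. N b"
  have "?C-lipschitz_on S N"
  proof (rule lipschitz_onI)
    fix x y
    have "N x \<le> N y + N (x - y)" "N y \<le> N x + N (x - y)"
      using is_norm_triangle[OF N, of y "x - y"] is_norm_triangle[OF N, of x "y - x"]
      by (simp_all add: is_norm_minus_commute[OF N, of x y])
    then show "dist (N x) (N y) \<le> ?C * dist x y"
      using is_norm_le_sum_Basis[of "x - y"] by (simp add: dist_norm dist_real_def abs_le_iff)
  qed (simp add: sum_nonneg is_norm_nonneg[OF N])
  then show ?thesis by (rule lipschitz_on_continuous_on)
qed

lemma is_norm_ge_norm: "\<exists>k>0. \<forall>x. k * norm x \<le> N x"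
proof -
  obtain b :: 'a where "b \<in> Basis" using nonempty_Basis by blast
  then have "sphere (0::'a) 1 \<noteq> {}" by auto
  then obtain x0 where x0: "x0 \<in> sphere 0 1" and min: "\<And>y. y \<in> sphere 0 1 \<Longrightarrow> N x0 \<le> N y"
    using continuous_attains_inf[OF compact_sphere _ is_norm_continuous_on] by blast
  have "N x0 * norm x \<le> N x" for x
  proof (cases "x = 0")
    case False
    have "N x0 \<le> N ((1 / norm x) *\<^sub>R x)" using False by (intro min) simp
    also have "\<dots> = N x / norm x" by (simp add: is_norm_scaleR[OF N])
    finally show ?thesis using False by (simp add: field_simps)
  qed (simp add: is_norm_zero[OF N])
  moreover have "0 < N x0" using x0 by (intro is_norm_pos[OF N]) auto
  ultimately show ?thesis by blast
qed

lemma is_norm_sq_ge_norm_sq: "\<exists>m>0. \<forall>x. m * (norm x)\<^sup>2 \<le> (N x)\<^sup>2"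
proof -
  obtain k where k: "0 < k" "\<And>x. k * norm x \<le> N x" using is_norm_ge_norm by blast
  have "k\<^sup>2 * (norm x)\<^sup>2 \<le> (N x)\<^sup>2" for x
    using power_mono[OF k(2)[of x]] k(1) by (simp add: power_mult_distrib)
  then show ?thesis using k(1) by (intro exI[of _ "k\<^sup>2"]) auto
qed

end

lemma bregman_kernel_convexity_gap_ge:
  fixes \<phi> :: "'a::euclidean_space \<Rightarrow> real"
  assumes kernel: "bregman_kernel D \<phi> g" and N: "is_norm N"
    and strong: "\<And>x x'. x \<in> D \<Longrightarrow> x' \<in> interior D \<Longrightarrow> bregman_dist \<phi> g x x' \<ge> 1/2 * (N (x - x'))\<^sup>2"
    and x: "x \<in> D" and y: "y \<in> D" and t: "0 \<le> t" "t \<le> 1"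
  shows "t * (1 - t) * ((N (x - y))\<^sup>2 / 2) \<le> convexity_gap \<phi> x y t"
proof (rule convexity_gap_ge_from_interior[OF _ _ _ _ _ x y t])
  show "convex D" "interior D \<noteq> {}" "continuous_on D \<phi>"
    using kernel by (auto simp: bregman_kernel_def convex_on_def)
  show "continuous_on UNIV (\<lambda>v. (N v)\<^sup>2 / 2)"
    by (intro continuous_intros is_norm_continuous_on[OF N]) simp
  fix x y :: 'a and t :: real
  assume x: "x \<in> interior D" and y: "y \<in> interior D" and t: "0 \<le> t" "t \<le> 1"
  define w where "w = (1 - t) *\<^sub>R x + t *\<^sub>R y"
  have w: "w \<in> interior D"
    unfolding w_def using convexD_alt[OF convex_interior x y t] \<open>convex D\<close> by simp
  have "N (x - w) = t * N (x - y)" "N (y - w) = (1 - t) * N (x - y)"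
    using t is_norm_scaleR[OF N, of t "x - y"] is_norm_scaleR[OF N, of "1 - t" "x - y"]
      is_norm_minus_commute[OF N, of y w]
    by (simp_all add: w_def algebra_simps)
  then have "(N (x - y))\<^sup>2 / 2 * t\<^sup>2 = 1/2 * (N (x - w))\<^sup>2"
    "(N (x - y))\<^sup>2 / 2 * (1 - t)\<^sup>2 = 1/2 * (N (y - w))\<^sup>2"
    by (simp_all add: power_mult_distrib)
  with strong[OF interior_subset[THEN subsetD, OF x] w] strong[OF interior_subset[THEN subsetD, OF y] w]
  show "t * (1 - t) * ((N (x - y))\<^sup>2 / 2) \<le> convexity_gap \<phi> x y t"
    by (intro convexity_gap_ge_of_tangent_bounds[OF t w_def, where G = "g w"])
      (simp_all add: bregman_dist_def)
qed

lemma relatively_smooth_convexity_gap_le: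
  fixes \<phi> h :: "'a::euclidean_space \<Rightarrow> real"
  assumes kernel: "bregman_kernel D \<phi> g"
    and h_diff: "\<And>x. x \<in> D \<Longrightarrow> (h has_derivative (\<lambda>v. gh x \<bullet> v)) (at x)"
    and smooth: "\<And>x x'. x \<in> D \<Longrightarrow> x' \<in> interior D \<Longrightarrow>
      h x - h x' - gh x' \<bullet> (x - x') \<le> L * bregman_dist \<phi> g x x'"
    and x: "x \<in> D" and y: "y \<in> D" and t: "0 \<le> t" "t \<le> 1"
  shows "convexity_gap h x y t \<le> L * convexity_gap \<phi> x y t"
proof -
  have "t * (1 - t) * (\<lambda>v. 0) (x - y) \<le> convexity_gap (\<lambda>x. L * \<phi> x - h x) x y t"
  proof (rule convexity_gap_ge_from_interior[OF _ _ _ _ _ x y t])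
    show "convex D" "interior D \<noteq> {}"
      using kernel by (auto simp: bregman_kernel_def convex_on_def)
    have "continuous_on D h"
      using h_diff by (intro continuous_at_imp_continuous_on ballI has_derivative_continuous) blast
    then show "continuous_on D (\<lambda>x. L * \<phi> x - h x)"
      using kernel by (intro continuous_intros) (auto simp: bregman_kernel_def)
    fix x y :: 'a and t :: real
    assume x: "x \<in> interior D" and y: "y \<in> interior D" and t: "0 \<le> t" "t \<le> 1"
    define w where "w = (1 - t) *\<^sub>R x + t *\<^sub>R y"
    have w: "w \<in> interior D"
      unfolding w_def using convexD_alt[OF convex_interior x y t] \<open>convex D\<close> by simp
    show "t * (1 - t) * 0 \<le> convexity_gap (\<lambda>x. L * \<phi> x - h x) x y t"
      using smooth[OF interior_subset[THEN subsetD, OF x] w] smooth[OF interior_subset[THEN subsetD, OF y] w]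
      by (intro convexity_gap_ge_of_tangent_bounds[OF t w_def, where G = "L *\<^sub>R g w - gh w"])
        (simp_all add: bregman_dist_def algebra_simps)
  qed simp
  then show ?thesis by (simp add: convexity_gap_def algebra_simps)
qed

lemma op_norm_pd_bound:
  fixes A :: "real^'n^'m"
  assumes Np: "is_norm Np" and Nd: "is_norm Nd"
  shows "\<bar>v \<bullet> (A *v u)\<bar> \<le> op_norm_pd Np Nd A * Np u * Nd v"
proof -
  obtain kp where kp: "0 < kp" "\<And>x. kp * norm x \<le> Np x" using is_norm_ge_norm[OF Np] by blast
  obtain kd where kd: "0 < kd" "\<And>x. kd * norm x \<le> Nd x" using is_norm_ge_norm[OF Nd] by blast
  obtain B where B: "0 < B" "\<And>x. norm (A *v x) \<le> norm x * B"
    using bounded_linear.pos_bounded[OF matrix_vector_mul_bounded_linear] by blast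
  have "v \<bullet> (A *v u) \<le> B / (kd * kp) * (Nd v * Np u)" for u v
  proof -
    have "v \<bullet> (A *v u) \<le> norm v * (norm u * B)"
      by (meson B Cauchy_Schwarz_ineq2 abs_le_D1 mult_left_mono norm_ge_zero order_trans)
    also have "\<dots> = B / (kd * kp) * ((kd * norm v) * (kp * norm u))"
      using kp kd by (simp add: field_simps)
    also have "\<dots> \<le> B / (kd * kp) * (Nd v * Np u)"
      using kp kd B by (intro mult_left_mono mult_mono) (auto simp: is_norm_nonneg[OF Nd])
    finally show ?thesis .
  qed
  then have bdd: "bdd_above {v \<bullet> (A *v u) / (Nd v * Np u) | u v. u \<noteq> 0 \<and> v \<noteq> 0}"
    by (intro bdd_aboveI[of _ "B / (kd * kp)"])
      (auto simp: divide_le_eq is_norm_pos[OF Np] is_norm_pos[OF Nd])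
  have "w \<bullet> (A *v u) \<le> op_norm_pd Np Nd A * Np u * Nd w" for w
  proof (cases "u = 0 \<or> w = 0")
    case False
    then have "w \<bullet> (A *v u) / (Nd w * Np u) \<le> op_norm_pd Np Nd A"
      unfolding op_norm_pd_def by (intro cSup_upper[OF _ bdd]) blast
    then show ?thesis using False by (simp add: divide_le_eq is_norm_pos[OF Np] is_norm_pos[OF Nd] mult_ac)
  qed (auto simp: is_norm_zero[OF Np] is_norm_zero[OF Nd])
  from this[of v] this[of "- v"] show ?thesis by (simp add: is_norm_minus[OF Nd] abs_le_iff)
qed

lemma bilinear_inner_matrix_vector:
  fixes A :: "real^'n^'m"
  shows "bilinear (\<lambda>x z. z \<bullet> (A *v x))"
  unfolding bilinear_def linear_iff
  by (simp add: matrix_vector_right_distrib matrix_vector_mult_scaleR inner_add_left inner_add_right)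

lemma psd_quadratic_form_nonneg:
  fixes \<alpha> \<beta> n a b :: real
  assumes "0 \<le> \<alpha>" "0 \<le> \<beta>" "n\<^sup>2 \<le> \<alpha> * \<beta>"
  shows "0 \<le> \<alpha> * a\<^sup>2 + \<beta> * b\<^sup>2 - 2 * n * a * b"
proof (cases "\<alpha> = 0")
  case True
  then show ?thesis using assms by simp
next
  case False
  have "\<alpha> * (\<alpha> * a\<^sup>2 + \<beta> * b\<^sup>2 - 2 * n * a * b) = (\<alpha> * a - n * b)\<^sup>2 + (\<alpha> * \<beta> - n\<^sup>2) * b\<^sup>2"
    by (simp add: power2_eq_square algebra_simps)
  also have "\<dots> \<ge> 0" using assms by simp
  finally show ?thesis using False assms(1) by (simp add: zero_le_mult_iff)
qed

lemma power2_mult_le_of_abs_le_one: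
  fixes s n :: real
  assumes "\<bar>s\<bar> \<le> 1"
  shows "(s * n)\<^sup>2 \<le> n\<^sup>2"
  using assms abs_square_le_1[of s] by (simp add: power_mult_distrib mult_left_le_one_le)

lemma step_size_condition_iff:
  fixes \<sigma> \<tau> n l :: real
  assumes "0 < \<sigma>" "0 < \<tau>"
  shows "\<sigma> * \<tau> * n\<^sup>2 + \<tau> * l \<le> 1 \<longleftrightarrow> n\<^sup>2 \<le> (1/\<tau> - l) * (1/\<sigma>)"
    and "\<sigma> * \<tau> * n\<^sup>2 + \<tau> * l < 1 \<longleftrightarrow> n\<^sup>2 < (1/\<tau> - l) * (1/\<sigma>)"
  using assms by (simp_all add: field_simps)

lemma exists_margin:
  fixes p q n :: real
  assumes "n\<^sup>2 < p * q" "0 < q"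
  shows "\<exists>\<epsilon>>0. \<epsilon> \<le> p \<and> \<epsilon> \<le> q \<and> n\<^sup>2 \<le> (p - \<epsilon>) * (q - \<epsilon>)"
proof -
  have "0 < p * q" using assms(1) zero_le_power2[of n] by linarith
  then have "0 < p" using assms(2) by (simp add: zero_less_mult_iff)
  define \<epsilon> where "\<epsilon> = (p * q - n\<^sup>2) / (p + q)"
  have e: "\<epsilon> * (p + q) = p * q - n\<^sup>2" unfolding \<epsilon>_def using \<open>0 < p\<close> assms by simp
  have "0 < \<epsilon>" unfolding \<epsilon>_def using \<open>0 < p\<close> assms by simp
  moreover have "\<epsilon> \<le> p" "\<epsilon> \<le> q"
  proof -
    have "\<epsilon> * (p + q) \<le> p * (p + q)" "\<epsilon> * (p + q) \<le> q * (p + q)"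
      using e by (simp_all add: algebra_simps power2_eq_square)
        (use zero_le_square[of n] zero_le_square[of p] zero_le_square[of q] in linarith)+
    then show "\<epsilon> \<le> p" "\<epsilon> \<le> q" using \<open>0 < p\<close> assms by (simp_all add: mult_le_cancel_right)
  qed
  moreover have "(p - \<epsilon>) * (q - \<epsilon>) = n\<^sup>2 + \<epsilon>\<^sup>2"
    using e by (simp add: algebra_simps power2_eq_square)
  ultimately show ?thesis by (intro exI[of _ \<epsilon>]) auto
qed

locale primal_dual_coupling =
  fixes S :: "'a::euclidean_space set" and T :: "'b::euclidean_space set"
    and f h :: "'a \<Rightarrow> real" and g :: "'b \<Rightarrow> real" and c :: "'a \<Rightarrow> 'b \<Rightarrow> real"
    and Np :: "'a \<Rightarrow> real" and Nd :: "'b \<Rightarrow> real" and L nc :: real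
  assumes convex_S: "convex S" and convex_T: "convex T"
    and norm_p: "is_norm Np" and norm_d: "is_norm Nd"
    and f_strongly_convex: "\<And>x y t. x \<in> S \<Longrightarrow> y \<in> S \<Longrightarrow> 0 \<le> t \<Longrightarrow> t \<le> 1 \<Longrightarrow>
      t * (1 - t) * ((Np (x - y))\<^sup>2 / 2) \<le> convexity_gap f x y t"
    and g_strongly_convex: "\<And>z w t. z \<in> T \<Longrightarrow> w \<in> T \<Longrightarrow> 0 \<le> t \<Longrightarrow> t \<le> 1 \<Longrightarrow>
      t * (1 - t) * ((Nd (z - w))\<^sup>2 / 2) \<le> convexity_gap g z w t"
    and h_relatively_smooth: "\<And>x y t. x \<in> S \<Longrightarrow> y \<in> S \<Longrightarrow> 0 \<le> t \<Longrightarrow> t \<le> 1 \<Longrightarrow>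
      convexity_gap h x y t \<le> L * convexity_gap f x y t"
    and bilinear_c: "bilinear c"
    and c_bounded: "\<And>x z. \<bar>c x z\<bar> \<le> nc * Np x * Nd z"
begin

text \<open>\<open>coupled (1/\<tau>) (1/\<sigma>) (\<plusminus>1) k\<close> is \<open>\<phi>\<^sub>\<plusminus> - k h\<close> in the paper's notation.\<close>
definition coupled :: "real \<Rightarrow> real \<Rightarrow> real \<Rightarrow> real \<Rightarrow> 'a \<times> 'b \<Rightarrow> real" where
  "coupled \<alpha> \<beta> s k = (\<lambda>(x, z). \<alpha> * f x + \<beta> * g z + s * c x z - k * h x)"

lemma convexity_gap_coupled_minus_sq:
  "convexity_gap (\<lambda>w. coupled \<alpha> \<beta> s k w - \<mu> / 2 * (norm w)\<^sup>2) (x1, z1) (x2, z2) t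
    = \<alpha> * convexity_gap f x1 x2 t + \<beta> * convexity_gap g z1 z2 t
      + s * (t * (1 - t) * c (x1 - x2) (z1 - z2)) - k * convexity_gap h x1 x2 t
      - \<mu> / 2 * (t * (1 - t) * ((norm (x1 - x2))\<^sup>2 + (norm (z1 - z2))\<^sup>2))"
proof -
  have "convexity_gap (\<lambda>w. coupled \<alpha> \<beta> s k w - \<mu> / 2 * (norm w)\<^sup>2) (x1, z1) (x2, z2) t
      = \<alpha> * convexity_gap f x1 x2 t + \<beta> * convexity_gap g z1 z2 t
        + s * convexity_gap (\<lambda>(x, z). c x z) (x1, z1) (x2, z2) t - k * convexity_gap h x1 x2 t
        - \<mu> / 2 * convexity_gap (\<lambda>w. (norm w)\<^sup>2) (x1, z1) (x2, z2) t"
    by (simp add: convexity_gap_def coupled_def field_simps)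
  then show ?thesis
    by (simp add: convexity_gap_bilinear[OF bilinear_c] convexity_gap_norm_sq norm_Pair)
qed

lemma convex_on_coupled_minus_sq:
  assumes k: "0 \<le> k" and \<epsilon>: "0 \<le> \<epsilon>" "\<epsilon> \<le> \<alpha> - k * L" "\<epsilon> \<le> \<beta>"
    and discriminant: "(s * nc)\<^sup>2 \<le> (\<alpha> - k * L - \<epsilon>) * (\<beta> - \<epsilon>)"
    and \<mu>_p: "\<And>x. \<mu> * (norm x)\<^sup>2 \<le> \<epsilon> * (Np x)\<^sup>2" and \<mu>_d: "\<And>z. \<mu> * (norm z)\<^sup>2 \<le> \<epsilon> * (Nd z)\<^sup>2"
  shows "convex_on (S \<times> T) (\<lambda>w. coupled \<alpha> \<beta> s k w - \<mu> / 2 * (norm w)\<^sup>2)"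
proof (rule convex_onI_convexity_gap)
  show "convex (S \<times> T)" using convex_S convex_T by (rule convex_Times)
  fix p q :: "'a \<times> 'b" and t :: real
  assume "p \<in> S \<times> T" "q \<in> S \<times> T" and t: "0 < t" "t < 1"
  then obtain x1 z1 x2 z2 where pq: "p = (x1, z1)" "q = (x2, z2)"
    and x: "x1 \<in> S" "x2 \<in> S" and z: "z1 \<in> T" "z2 \<in> T" by auto
  define \<theta> where "\<theta> = t * (1 - t)"
  define a where "a = Np (x1 - x2)"
  define b where "b = Nd (z1 - z2)"
  define gf gg gh where "gf = convexity_gap f x1 x2 t" and "gg = convexity_gap g z1 z2 t"
    and "gh = convexity_gap h x1 x2 t"
  define X Z where "X = (norm (x1 - x2))\<^sup>2" and "Z = (norm (z1 - z2))\<^sup>2"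
  define Q where "Q = (\<alpha> - k * L - \<epsilon>) * a\<^sup>2 + (\<beta> - \<epsilon>) * b\<^sup>2 - 2 * (\<bar>s\<bar> * nc) * a * b"
  have "0 \<le> \<theta>" using t by (simp add: \<theta>_def)
  have "convexity_gap (\<lambda>w. coupled \<alpha> \<beta> s k w - \<mu> / 2 * (norm w)\<^sup>2) p q t
      = (\<alpha> - k * L) * (gf - \<theta> * (a\<^sup>2 / 2)) + \<beta> * (gg - \<theta> * (b\<^sup>2 / 2)) + k * (L * gf - gh)
        + (s * (\<theta> * c (x1 - x2) (z1 - z2)) + \<theta> * (\<bar>s\<bar> * nc * a * b))
        + \<theta> * (\<epsilon> * a\<^sup>2 - \<mu> * X) / 2 + \<theta> * (\<epsilon> * b\<^sup>2 - \<mu> * Z) / 2 + \<theta> * Q / 2"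
    unfolding pq convexity_gap_coupled_minus_sq Q_def gf_def gg_def gh_def \<theta>_def X_def Z_def
    by (simp add: field_simps)
  also have "0 \<le> \<dots>"
  proof -
    have "0 \<le> \<alpha> - k * L" "0 \<le> \<beta>" using \<epsilon> by auto
    moreover have "0 \<le> gf - \<theta> * (a\<^sup>2 / 2)" "0 \<le> gg - \<theta> * (b\<^sup>2 / 2)" "0 \<le> L * gf - gh"
      using f_strongly_convex[OF x] g_strongly_convex[OF z] h_relatively_smooth[OF x] t
      unfolding gf_def gg_def gh_def a_def b_def \<theta>_def by auto
    moreover have "\<bar>s\<bar> * (\<theta> * \<bar>c (x1 - x2) (z1 - z2)\<bar>) \<le> \<bar>s\<bar> * (\<theta> * (nc * a * b))"
      using c_bounded[of "x1 - x2" "z1 - z2"] \<open>0 \<le> \<theta>\<close> unfolding a_def b_def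
      by (intro mult_left_mono) auto
    then have "\<bar>s * (\<theta> * c (x1 - x2) (z1 - z2))\<bar> \<le> \<theta> * (\<bar>s\<bar> * nc * a * b)"
      using \<open>0 \<le> \<theta>\<close> by (simp add: abs_mult mult_ac)
    moreover have "0 \<le> \<epsilon> * a\<^sup>2 - \<mu> * X" "0 \<le> \<epsilon> * b\<^sup>2 - \<mu> * Z"
      using \<mu>_p \<mu>_d unfolding X_def Z_def a_def b_def by auto
    moreover have "0 \<le> Q"
      using psd_quadratic_form_nonneg[of "\<alpha> - k * L - \<epsilon>" "\<beta> - \<epsilon>" "\<bar>s\<bar> * nc"] \<epsilon> discriminant
      unfolding Q_def by (simp add: power_mult_distrib)
    ultimately show ?thesis
      using k \<open>0 \<le> \<theta>\<close> by (simp add: abs_le_iff)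
  qed
  finally show "0 \<le> convexity_gap (\<lambda>w. coupled \<alpha> \<beta> s k w - \<mu> / 2 * (norm w)\<^sup>2) p q t" .
qed

lemma convex_on_coupled:
  assumes "0 < \<sigma>" "0 < \<tau>" "\<bar>s\<bar> \<le> 1" "0 \<le> k" and step: "\<sigma> * \<tau> * nc\<^sup>2 + \<tau> * (k * L) \<le> 1"
  shows "convex_on (S \<times> T) (coupled (1/\<tau>) (1/\<sigma>) s k)"
proof -
  have "(s * nc)\<^sup>2 \<le> nc\<^sup>2"
    using \<open>\<bar>s\<bar> \<le> 1\<close> by (rule power2_mult_le_of_abs_le_one)
  also have "nc\<^sup>2 \<le> (1/\<tau> - k * L) * (1/\<sigma>)"
    using step step_size_condition_iff(1)[OF \<open>0 < \<sigma>\<close> \<open>0 < \<tau>\<close>] by simp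
  finally have discriminant: "(s * nc)\<^sup>2 \<le> (1/\<tau> - k * L) * (1/\<sigma>)" .
  then have "0 \<le> (1/\<tau> - k * L) * (1/\<sigma>)"
    using zero_le_power2 order_trans by blast
  then have "0 \<le> 1/\<tau> - k * L"
    using \<open>0 < \<sigma>\<close> by (simp add: zero_le_divide_iff)
  with discriminant show ?thesis
    using convex_on_coupled_minus_sq[of k 0 "1/\<tau>" "1/\<sigma>" s 0] assms by simp
qed

lemma strongly_convex_on_coupled:
  assumes "0 < \<sigma>" "0 < \<tau>" "\<bar>s\<bar> \<le> 1" "0 \<le> k" and step: "\<sigma> * \<tau> * nc\<^sup>2 + \<tau> * (k * L) < 1"
  shows "strongly_convex_on (S \<times> T) (coupled (1/\<tau>) (1/\<sigma>) s k)"
proof -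
  have "(s * nc)\<^sup>2 \<le> nc\<^sup>2"
    using \<open>\<bar>s\<bar> \<le> 1\<close> by (rule power2_mult_le_of_abs_le_one)
  also have "nc\<^sup>2 < (1/\<tau> - k * L) * (1/\<sigma>)"
    using step step_size_condition_iff(2)[OF \<open>0 < \<sigma>\<close> \<open>0 < \<tau>\<close>] by simp
  finally obtain \<epsilon> where \<epsilon>: "0 < \<epsilon>" "\<epsilon> \<le> 1/\<tau> - k * L" "\<epsilon> \<le> 1/\<sigma>"
    and discriminant: "(s * nc)\<^sup>2 \<le> (1/\<tau> - k * L - \<epsilon>) * (1/\<sigma> - \<epsilon>)"
    using exists_margin \<open>0 < \<sigma>\<close> by (metis divide_pos_pos zero_less_one)
  obtain mp where mp: "0 < mp" "\<And>x. mp * (norm x)\<^sup>2 \<le> (Np x)\<^sup>2"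
    using is_norm_sq_ge_norm_sq[OF norm_p] by blast
  obtain md where md: "0 < md" "\<And>z. md * (norm z)\<^sup>2 \<le> (Nd z)\<^sup>2"
    using is_norm_sq_ge_norm_sq[OF norm_d] by blast
  define \<mu> where "\<mu> = \<epsilon> * min mp md"
  have \<mu>_p: "\<mu> * (norm x)\<^sup>2 \<le> \<epsilon> * (Np x)\<^sup>2" for x
    using mult_right_mono[OF min.cobounded1[of mp md], of "(norm x)\<^sup>2"] mp(2)[of x] \<epsilon>(1)
    unfolding \<mu>_def by (simp add: mult.assoc mult_left_mono order_trans)
  have \<mu>_d: "\<mu> * (norm z)\<^sup>2 \<le> \<epsilon> * (Nd z)\<^sup>2" for z
    using mult_right_mono[OF min.cobounded2[of mp md], of "(norm z)\<^sup>2"] md(2)[of z] \<epsilon>(1)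
    unfolding \<mu>_def by (simp add: mult.assoc mult_left_mono order_trans)
  have "convex_on (S \<times> T) (\<lambda>w. coupled (1/\<tau>) (1/\<sigma>) s k w - \<mu> / 2 * (norm w)\<^sup>2)"
    using convex_on_coupled_minus_sq[OF \<open>0 \<le> k\<close> less_imp_le[OF \<epsilon>(1)] \<epsilon>(2,3) discriminant \<mu>_p \<mu>_d] .
  moreover have "0 < \<mu>" using \<epsilon> mp md by (simp add: \<mu>_def)
  ultimately show ?thesis unfolding strongly_convex_on_def by blast
qed

end

theorem mainTheorem2:
  fixes \<phi>p :: "real^'n \<Rightarrow> real" and gp :: "real^'n \<Rightarrow> real^'n" and Dp :: "(real^'n) set"
    and \<phi>d :: "real^'m \<Rightarrow> real" and gd :: "real^'m \<Rightarrow> real^'m" and Dd :: "(real^'m) set"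
    and Np :: "real^'n \<Rightarrow> real" and Nd :: "real^'m \<Rightarrow> real"
    and h :: "real^'n \<Rightarrow> real" and gh :: "real^'n \<Rightarrow> real^'n" and Dh :: "(real^'n) set"
    and A :: "real^'n^'m" and L \<sigma> \<tau> :: real
  assumes kp: "bregman_kernel Dp \<phi>p gp"
    and kd: "bregman_kernel Dd \<phi>d gd"
    and Np: "is_norm Np" and Nd: "is_norm Nd"
    and sp: "\<And>x x'. x \<in> Dp \<Longrightarrow> x' \<in> interior Dp \<Longrightarrow> bregman_dist \<phi>p gp x x' \<ge> 1/2 * (Np (x - x'))\<^sup>2"
    and sd: "\<And>z z'. z \<in> Dd \<Longrightarrow> z' \<in> interior Dd \<Longrightarrow> bregman_dist \<phi>d gd z z' \<ge> 1/2 * (Nd (z - z'))\<^sup>2"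
    and h_open: "open Dh" and h_conv: "convex_on Dh h"
    and h_diff: "\<And>x. x \<in> Dh \<Longrightarrow> (h has_derivative (\<lambda>v. gh x \<bullet> v)) (at x)"
    and dom_sub: "Dp \<subseteq> Dh"
    and L_pos: "L > 0"
    and h_smooth: "\<And>x x'. x \<in> Dp \<Longrightarrow> x' \<in> interior Dp \<Longrightarrow>
                      h x - h x' - gh x' \<bullet> (x - x') \<le> L * bregman_dist \<phi>p gp x x'"
    and \<sigma>: "\<sigma> > 0" and \<tau>: "\<tau> > 0"
  shows
   "let nA = op_norm_pd Np Nd A;
        \<phi>plus = (\<lambda>(x, z). 1/\<tau> * \<phi>p x + 1/\<sigma> * \<phi>d z + z \<bullet> (A *v x));
        \<phi>minus = (\<lambda>(x, z). 1/\<tau> * \<phi>p x + 1/\<sigma> * \<phi>d z - z \<bullet> (A *v x));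
        \<phi>dcv = (\<lambda>(x, z). \<phi>plus (x, z) - h x);
        \<phi>pcv = (\<lambda>(x, z). \<phi>minus (x, z) - h x);
        S = Dp \<times> Dd
    in (\<sigma> * \<tau> * nA\<^sup>2 \<le> 1 \<longrightarrow> convex_on S \<phi>plus \<and> convex_on S \<phi>minus)
     \<and> (\<sigma> * \<tau> * nA\<^sup>2 < 1 \<longrightarrow> strongly_convex_on S \<phi>plus \<and> strongly_convex_on S \<phi>minus)
     \<and> (\<sigma> * \<tau> * nA\<^sup>2 + \<tau> * L \<le> 1 \<longrightarrow> convex_on S \<phi>dcv \<and> convex_on S \<phi>pcv)
     \<and> (\<sigma> * \<tau> * nA\<^sup>2 + \<tau> * L < 1 \<longrightarrow> strongly_convex_on S \<phi>dcv \<and> strongly_convex_on S \<phi>pcv)"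
proof -
  interpret primal_dual_coupling Dp Dd \<phi>p h \<phi>d "\<lambda>x z. z \<bullet> (A *v x)" Np Nd L "op_norm_pd Np Nd A"
  proof unfold_locales
    show "convex Dp" "convex Dd" using kp kd by (auto simp: bregman_kernel_def convex_on_def)
    show "t * (1 - t) * ((Np (x - y))\<^sup>2 / 2) \<le> convexity_gap \<phi>p x y t"
      if "x \<in> Dp" "y \<in> Dp" "0 \<le> t" "t \<le> 1" for x y t
      using bregman_kernel_convexity_gap_ge[OF kp Np sp that] .
    show "t * (1 - t) * ((Nd (z - w))\<^sup>2 / 2) \<le> convexity_gap \<phi>d z w t"
      if "z \<in> Dd" "w \<in> Dd" "0 \<le> t" "t \<le> 1" for z w t
      using bregman_kernel_convexity_gap_ge[OF kd Nd sd that] .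
    show "convexity_gap h x y t \<le> L * convexity_gap \<phi>p x y t"
      if "x \<in> Dp" "y \<in> Dp" "0 \<le> t" "t \<le> 1" for x y t
      using relatively_smooth_convexity_gap_le[OF kp _ h_smooth that] h_diff dom_sub by blast
    show "\<bar>z \<bullet> (A *v x)\<bar> \<le> op_norm_pd Np Nd A * Np x * Nd z" for x z
      using op_norm_pd_bound[OF Np Nd] .
  qed (use Np Nd bilinear_inner_matrix_vector in auto)
  show ?thesis
    using convex_on_coupled[OF \<sigma> \<tau>, of 1 0] convex_on_coupled[OF \<sigma> \<tau>, of "-1" 0]
      convex_on_coupled[OF \<sigma> \<tau>, of 1 1] convex_on_coupled[OF \<sigma> \<tau>, of "-1" 1]
      strongly_convex_on_coupled[OF \<sigma> \<tau>, of 1 0] strongly_convex_on_coupled[OF \<sigma> \<tau>, of "-1" 0]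
      strongly_convex_on_coupled[OF \<sigma> \<tau>, of 1 1] strongly_convex_on_coupled[OF \<sigma> \<tau>, of "-1" 1]
    unfolding coupled_def Let_def by simp
qed

end
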